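(* Let $\mathcal{C}$ be a triangulated category with translation functor $\Sigma$. (1) Suppose $\rho$ assigns to each morphism $f$ of $\mathcal{C}$ a real number $\rho(f)\geq0$ such that (M1) $\rho(\Sigma f)=\rho(f)$; (M2) $\rho(f\oplus g)=\rho(f)+\rho(g)$; (M3) for every exact triangle $X\xrightarrow{f}Y\xrightarrow{g}Z\rightsquigarrow$, $\rho(f)+\rho(g)=\rho(\mathrm{id}_Y)$. Then the function on objects $X\mapsto\rho(\mathrm{id}_X)$ is nonnegative and satisfies (O1) $\rho(\Sigma X)=\rho(X)$; (O2) $\rho(X\oplus Y)=\rho(X)+\rho(Y)$; (O3) for every exact triangle $X\to Y\to Z\rightsquigarrow$, $\rho(Y)\leq\rho(X)+\rho(Z)$. (2) Conversely, if $\rho$ assigns to each object a real number $\rho(X)\geq0$ satisfying (O1), (O2), (O3), then the assignment $\rho(f:X\to Y)=\frac{\rho(X)+\rho(Y)-\rho(\operatorname{cone}(f))}{2}$ is a nonnegative function on morphisms satisfying (M1), (M2), (M3). *)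

theory Defs
  imports Complex_Main
begin

text \<open>A (small-or-large) category presented by a type of objects 'o and a type of
  morphisms 'm: every element of 'm is a morphism with source src f and target tgt f.
  cmp g f is the composite g after f (defined when tgt f = src g).\<close>

record ('o, 'm) tcat =
  src :: "'m \<Rightarrow> 'o"
  tgt :: "'m \<Rightarrow> 'o"
  cmp :: "'m \<Rightarrow> 'm \<Rightarrow> 'm"
  ident :: "'o \<Rightarrow> 'm"
  madd :: "'m \<Rightarrow> 'm \<Rightarrow> 'm"
  mzero :: "'o \<Rightarrow> 'o \<Rightarrow> 'm"
  mneg :: "'m \<Rightarrow> 'm"
  shift_o :: "'o \<Rightarrow> 'o"
  shift_m :: "'m \<Rightarrow> 'm"
  osum :: "'o \<Rightarrow> 'o \<Rightarrow> 'o"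
  in1 :: "'o \<Rightarrow> 'o \<Rightarrow> 'm"
  in2 :: "'o \<Rightarrow> 'o \<Rightarrow> 'm"
  pr1 :: "'o \<Rightarrow> 'o \<Rightarrow> 'm"
  pr2 :: "'o \<Rightarrow> 'o \<Rightarrow> 'm"
  exact_tri :: "'m \<Rightarrow> 'm \<Rightarrow> 'm \<Rightarrow> bool"

definition hom :: "('o, 'm) tcat \<Rightarrow> 'o \<Rightarrow> 'o \<Rightarrow> 'm set" where
  "hom C X Y = {f. src C f = X \<and> tgt C f = Y}"

definition is_iso :: "('o, 'm) tcat \<Rightarrow> 'm \<Rightarrow> bool" where
  "is_iso C f \<longleftrightarrow> (\<exists>g. g \<in> hom C (tgt C f) (src C f) \<and>
      cmp C g f = ident C (src C f) \<and> cmp C f g = ident C (tgt C f))"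

definition is_zero_obj :: "('o, 'm) tcat \<Rightarrow> 'o \<Rightarrow> bool" where
  "is_zero_obj C Z \<longleftrightarrow> ident C Z = mzero C Z Z"

definition msum :: "('o, 'm) tcat \<Rightarrow> 'm \<Rightarrow> 'm \<Rightarrow> 'm" where
  "msum C f g =
     madd C (cmp C (in1 C (tgt C f) (tgt C g)) (cmp C f (pr1 C (src C f) (src C g))))
            (cmp C (in2 C (tgt C f) (tgt C g)) (cmp C g (pr2 C (src C f) (src C g))))"

definition is_triangle :: "('o, 'm) tcat \<Rightarrow> 'm \<Rightarrow> 'm \<Rightarrow> 'm \<Rightarrow> bool" where
  "is_triangle C f g h \<longleftrightarrow>
     tgt C f = src C g \<and> tgt C g = src C h \<and> tgt C h = shift_o C (src C f)"

definition tri_morphism :: "('o, 'm) tcat \<Rightarrow> 'm \<Rightarrow> 'm \<Rightarrow> 'm \<Rightarrow> 'm \<Rightarrow> 'm \<Rightarrow> 'm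
    \<Rightarrow> 'm \<Rightarrow> 'm \<Rightarrow> 'm \<Rightarrow> bool" where
  "tri_morphism C f g h f' g' h' a b c \<longleftrightarrow>
     a \<in> hom C (src C f) (src C f') \<and> b \<in> hom C (tgt C f) (tgt C f') \<and>
     c \<in> hom C (tgt C g) (tgt C g') \<and>
     cmp C b f = cmp C f' a \<and> cmp C c g = cmp C g' b \<and>
     cmp C (shift_m C a) h = cmp C h' c"

locale triangulated_category =
  fixes C :: "('o, 'm) tcat"
  assumes
    src_ident: "src C (ident C X) = X"
  and tgt_ident: "tgt C (ident C X) = X"
  and src_cmp: "tgt C f = src C g \<Longrightarrow> src C (cmp C g f) = src C f"
  and tgt_cmp: "tgt C f = src C g \<Longrightarrow> tgt C (cmp C g f) = tgt C g"
  and ident_left: "cmp C (ident C (tgt C f)) f = f"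
  and ident_right: "cmp C f (ident C (src C f)) = f"
  and cmp_assoc: "tgt C f = src C g \<Longrightarrow> tgt C g = src C h \<Longrightarrow>
                  cmp C h (cmp C g f) = cmp C (cmp C h g) f"
  and madd_hom: "src C f = src C g \<Longrightarrow> tgt C f = tgt C g \<Longrightarrow>
                 src C (madd C f g) = src C f \<and> tgt C (madd C f g) = tgt C f"
  and mzero_hom: "mzero C X Y \<in> hom C X Y"
  and mneg_hom: "src C (mneg C f) = src C f \<and> tgt C (mneg C f) = tgt C f"
  and madd_assoc: "f \<in> hom C X Y \<Longrightarrow> g \<in> hom C X Y \<Longrightarrow> h \<in> hom C X Y \<Longrightarrow>
                   madd C (madd C f g) h = madd C f (madd C g h)"
  and madd_comm: "f \<in> hom C X Y \<Longrightarrow> g \<in> hom C X Y \<Longrightarrow> madd C f g = madd C g f"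
  and madd_zero: "madd C f (mzero C (src C f) (tgt C f)) = f"
  and madd_neg: "madd C f (mneg C f) = mzero C (src C f) (tgt C f)"
  and cmp_madd_left: "g \<in> hom C Y Z \<Longrightarrow> g' \<in> hom C Y Z \<Longrightarrow> f \<in> hom C X Y \<Longrightarrow>
                      cmp C (madd C g g') f = madd C (cmp C g f) (cmp C g' f)"
  and cmp_madd_right: "g \<in> hom C Y Z \<Longrightarrow> f \<in> hom C X Y \<Longrightarrow> f' \<in> hom C X Y \<Longrightarrow>
                      cmp C g (madd C f f') = madd C (cmp C g f) (cmp C g f')"
  and zero_obj_ex: "\<exists>Z. is_zero_obj C Z"
  and in1_hom: "in1 C X Y \<in> hom C X (osum C X Y)"
  and in2_hom: "in2 C X Y \<in> hom C Y (osum C X Y)"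
  and pr1_hom: "pr1 C X Y \<in> hom C (osum C X Y) X"
  and pr2_hom: "pr2 C X Y \<in> hom C (osum C X Y) Y"
  and pr1_in1: "cmp C (pr1 C X Y) (in1 C X Y) = ident C X"
  and pr2_in2: "cmp C (pr2 C X Y) (in2 C X Y) = ident C Y"
  and pr1_in2: "cmp C (pr1 C X Y) (in2 C X Y) = mzero C Y X"
  and pr2_in1: "cmp C (pr2 C X Y) (in1 C X Y) = mzero C X Y"
  and biprod_id: "madd C (cmp C (in1 C X Y) (pr1 C X Y)) (cmp C (in2 C X Y) (pr2 C X Y))
                  = ident C (osum C X Y)"
  and shift_hom: "f \<in> hom C X Y \<Longrightarrow> shift_m C f \<in> hom C (shift_o C X) (shift_o C Y)"
  and shift_ident: "shift_m C (ident C X) = ident C (shift_o C X)"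
  and shift_cmp: "tgt C f = src C g \<Longrightarrow>
                  shift_m C (cmp C g f) = cmp C (shift_m C g) (shift_m C f)"
  and shift_madd: "f \<in> hom C X Y \<Longrightarrow> g \<in> hom C X Y \<Longrightarrow>
                   shift_m C (madd C f g) = madd C (shift_m C f) (shift_m C g)"
  and shift_fully_faithful: "h \<in> hom C (shift_o C X) (shift_o C Y) \<Longrightarrow>
                   \<exists>!f. f \<in> hom C X Y \<and> shift_m C f = h"
  and shift_ess_surj: "\<exists>X f. f \<in> hom C (shift_o C X) Y \<and> is_iso C f"
  and exact_triangle: "exact_tri C f g h \<Longrightarrow> is_triangle C f g h"
  and TR1_ident: "is_zero_obj C Z \<Longrightarrow>
                  exact_tri C (ident C X) (mzero C X Z) (mzero C Z (shift_o C X))"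
  and TR1_ex: "\<exists>g h. exact_tri C f g h"
  and TR1_iso: "exact_tri C f g h \<Longrightarrow> is_triangle C f' g' h' \<Longrightarrow>
                tri_morphism C f g h f' g' h' a b c \<Longrightarrow>
                is_iso C a \<Longrightarrow> is_iso C b \<Longrightarrow> is_iso C c \<Longrightarrow> exact_tri C f' g' h'"
  and TR2: "is_triangle C f g h \<Longrightarrow>
            exact_tri C f g h \<longleftrightarrow> exact_tri C g h (mneg C (shift_m C f))"
  and TR3: "exact_tri C f g h \<Longrightarrow> exact_tri C f' g' h' \<Longrightarrow>
            a \<in> hom C (src C f) (src C f') \<Longrightarrow> b \<in> hom C (tgt C f) (tgt C f') \<Longrightarrow>
            cmp C b f = cmp C f' a \<Longrightarrow>
            \<exists>c. tri_morphism C f g h f' g' h' a b c"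
  and TR4: "tgt C f = src C g \<Longrightarrow>
            exact_tri C f u u' \<Longrightarrow> exact_tri C g v v' \<Longrightarrow> exact_tri C (cmp C g f) w w' \<Longrightarrow>
            \<exists>a b. a \<in> hom C (tgt C u) (tgt C w) \<and> b \<in> hom C (tgt C w) (tgt C v) \<and>
              exact_tri C a b (cmp C (shift_m C u) v') \<and>
              cmp C a u = cmp C w g \<and> cmp C w' a = u' \<and>
              cmp C b w = v \<and> cmp C v' b = cmp C (shift_m C f) w'"

definition morphism_rho :: "('o, 'm) tcat \<Rightarrow> ('m \<Rightarrow> real) \<Rightarrow> bool" where
  "morphism_rho C \<rho> \<longleftrightarrow>
     (\<forall>f. 0 \<le> \<rho> f) \<and>
     (\<forall>f. \<rho> (shift_m C f) = \<rho> f) \<and>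
     (\<forall>f g. \<rho> (msum C f g) = \<rho> f + \<rho> g) \<and>
     (\<forall>f g h. exact_tri C f g h \<longrightarrow> \<rho> f + \<rho> g = \<rho> (ident C (tgt C f)))"

definition object_rho :: "('o, 'm) tcat \<Rightarrow> ('o \<Rightarrow> real) \<Rightarrow> bool" where
  "object_rho C \<rho> \<longleftrightarrow>
     (\<forall>X. 0 \<le> \<rho> X) \<and>
     (\<forall>X. \<rho> (shift_o C X) = \<rho> X) \<and>
     (\<forall>X Y. \<rho> (osum C X Y) = \<rho> X + \<rho> Y) \<and>
     (\<forall>f g h. exact_tri C f g h \<longrightarrow> \<rho> (tgt C f) \<le> \<rho> (src C f) + \<rho> (tgt C g))"

end

theory Submission
  imports Defs
begin

text \<open>
  Write \<open>\<rho>(X)\<close> for \<open>\<rho>(id\<^sub>X)\<close>. (1) For an exact triangle \<open>X \<rightarrow> Y \<rightarrow> Z \<rightarrow> \<Sigma>X\<close> with maps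
  \<open>f, g, h\<close>, condition (M3) applied to the triangle and to its rotations \<open>(g, h, -\<Sigma>f)\<close> and
  \<open>(-h, \<Sigma>f, -\<Sigma>g)\<close> gives
  \<open>\<rho>(Y) = \<rho> f + \<rho> g \<le> (\<rho>(-h) + \<rho>(\<Sigma>f)) + (\<rho> g + \<rho> h) = \<rho>(X) + \<rho>(Z)\<close>.

  (2) By the octahedral axiom, \<open>\<rho>\<close> takes the same value on all cones of \<open>f\<close>, and it is
  invariant under isomorphism. Then (M3) is the telescoping identity obtained from the
  cones \<open>Z\<close> of \<open>f\<close>, \<open>\<Sigma>X\<close> of \<open>g\<close> and \<open>0\<close> of \<open>id\<close>; (M1) holds because shifted triangles are
  exact; nonnegativity is (O3) for the rotated triangle \<open>Y \<rightarrow> Z \<rightarrow> \<Sigma>X\<close>. For (M2) the cone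
  of \<open>f \<oplus> g\<close> is isomorphic to the sum of the cones: comparison maps \<open>c, d\<close> in both
  directions come from TR3, and \<open>d c\<close>, \<open>c d\<close> are endomorphisms fixing the adjacent
  triangle maps, which forces them to be unipotent, hence invertible.
\<close>

context triangulated_category
begin

section \<open>Preadditive categories\<close>

abbreviation comp_C (infixl "\<cdot>" 70) where "g \<cdot> f \<equiv> cmp C g f"
abbreviation add_C (infixl "\<^bold>+" 65) where "f \<^bold>+ g \<equiv> madd C f g"

lemma hom_iff [simp]: "f \<in> hom C X Y \<longleftrightarrow> src C f = X \<and> tgt C f = Y"
  by (simp add: hom_def)

lemma src_tgt_simps [simp]:
  "src C (ident C X) = X" "tgt C (ident C X) = X"
  "src C (mzero C X Y) = X" "tgt C (mzero C X Y) = Y"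
  "src C (mneg C f) = src C f" "tgt C (mneg C f) = tgt C f"
  "src C (in1 C X Y) = X" "tgt C (in1 C X Y) = osum C X Y"
  "src C (in2 C X Y) = Y" "tgt C (in2 C X Y) = osum C X Y"
  "src C (pr1 C X Y) = osum C X Y" "tgt C (pr1 C X Y) = X"
  "src C (pr2 C X Y) = osum C X Y" "tgt C (pr2 C X Y) = Y"
  "src C (shift_m C f) = shift_o C (src C f)" "tgt C (shift_m C f) = shift_o C (tgt C f)"
  using src_ident tgt_ident mzero_hom[of X Y] mneg_hom[of f] in1_hom[of X Y] in2_hom[of X Y]
    pr1_hom[of X Y] pr2_hom[of X Y] shift_hom[of f "src C f" "tgt C f"] by auto

lemma src_tgt_cmp [simp]:
  "tgt C f = src C g \<Longrightarrow> src C (g \<cdot> f) = src C f"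
  "tgt C f = src C g \<Longrightarrow> tgt C (g \<cdot> f) = tgt C g"
  by (simp_all add: src_cmp tgt_cmp)

lemma src_tgt_madd [simp]:
  "src C f = src C g \<Longrightarrow> tgt C f = tgt C g \<Longrightarrow> src C (f \<^bold>+ g) = src C f"
  "src C f = src C g \<Longrightarrow> tgt C f = tgt C g \<Longrightarrow> tgt C (f \<^bold>+ g) = tgt C f"
  by (simp_all add: madd_hom)

lemma ident_cmp [simp]: "tgt C f = Y \<Longrightarrow> ident C Y \<cdot> f = f"
  using ident_left by blast

lemma cmp_ident [simp]: "src C f = X \<Longrightarrow> f \<cdot> ident C X = f"
  using ident_right by blast

lemma cmp_assoc': "tgt C f = src C g \<Longrightarrow> tgt C g = src C h \<Longrightarrow> (h \<cdot> g) \<cdot> f = h \<cdot> (g \<cdot> f)"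
  by (simp add: cmp_assoc)

lemma madd_commute: "src C f = src C g \<Longrightarrow> tgt C f = tgt C g \<Longrightarrow> f \<^bold>+ g = g \<^bold>+ f"
  using madd_comm[of f "src C f" "tgt C f" g] by simp

lemma madd_assoc': "src C f = src C g \<Longrightarrow> tgt C f = tgt C g \<Longrightarrow>
    src C h = src C g \<Longrightarrow> tgt C h = tgt C g \<Longrightarrow> (f \<^bold>+ g) \<^bold>+ h = f \<^bold>+ (g \<^bold>+ h)"
  using madd_assoc[of f "src C f" "tgt C f" g h] by simp

lemma madd_mzero_right [simp]: "src C f = X \<Longrightarrow> tgt C f = Y \<Longrightarrow> f \<^bold>+ mzero C X Y = f"
  using madd_zero by blast

lemma madd_mzero_left [simp]: "src C f = X \<Longrightarrow> tgt C f = Y \<Longrightarrow> mzero C X Y \<^bold>+ f = f"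
  using madd_zero[of f] madd_commute[of f "mzero C X Y"] by simp

lemma madd_mneg_right [simp]: "src C f = X \<Longrightarrow> tgt C f = Y \<Longrightarrow> f \<^bold>+ mneg C f = mzero C X Y"
  using madd_neg by blast

lemma madd_mneg_left [simp]: "src C f = X \<Longrightarrow> tgt C f = Y \<Longrightarrow> mneg C f \<^bold>+ f = mzero C X Y"
  using madd_neg[of f] madd_commute[of f "mneg C f"] by simp

lemma cmp_madd_distrib_right:
  "src C g = src C g' \<Longrightarrow> tgt C g = tgt C g' \<Longrightarrow> tgt C f = src C g \<Longrightarrow>
    (g \<^bold>+ g') \<cdot> f = g \<cdot> f \<^bold>+ g' \<cdot> f"
  using cmp_madd_left[of g "src C g" "tgt C g" g' f "src C f"] by simp

lemma cmp_madd_distrib_left: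
  "src C f = src C f' \<Longrightarrow> tgt C f = tgt C f' \<Longrightarrow> tgt C f = src C g \<Longrightarrow>
    g \<cdot> (f \<^bold>+ f') = g \<cdot> f \<^bold>+ g \<cdot> f'"
  using cmp_madd_right[of g "src C g" "tgt C g" f "src C f" f'] by simp

lemma idempotent_madd_eq_mzero:
  assumes "z \<^bold>+ z = z"
  shows "z = mzero C (src C z) (tgt C z)"
proof -
  have "z = (z \<^bold>+ z) \<^bold>+ mneg C z"
    by (simp add: madd_assoc')
  then show ?thesis
    using assms by simp
qed

lemma cmp_mzero_right [simp]: "src C g = Y \<Longrightarrow> g \<cdot> mzero C X Y = mzero C X (tgt C g)"
  using idempotent_madd_eq_mzero[of "g \<cdot> mzero C X Y"]
  by (simp add: cmp_madd_distrib_left[symmetric])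

lemma cmp_mzero_left [simp]: "tgt C f = Y \<Longrightarrow> mzero C Y Z \<cdot> f = mzero C (src C f) Z"
  using idempotent_madd_eq_mzero[of "mzero C Y Z \<cdot> f"]
  by (simp add: cmp_madd_distrib_right[symmetric])

lemma mneg_unique:
  assumes "src C b = src C a" "tgt C b = tgt C a" "a \<^bold>+ b = mzero C (src C a) (tgt C a)"
  shows "b = mneg C a"
proof -
  have "b = (b \<^bold>+ a) \<^bold>+ mneg C a"
    using assms by (simp add: madd_assoc')
  also have "\<dots> = mneg C a"
    using assms by (simp add: madd_commute[of b a])
  finally show ?thesis .
qed

lemma mneg_mneg [simp]: "mneg C (mneg C f) = f"
  using mneg_unique[of f "mneg C f"] by simp

lemma mneg_mzero [simp]: "mneg C (mzero C X Y) = mzero C X Y"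
  using mneg_unique[of "mzero C X Y" "mzero C X Y"] by simp

lemma cmp_mneg_right: "tgt C f = src C g \<Longrightarrow> g \<cdot> mneg C f = mneg C (g \<cdot> f)"
  by (rule mneg_unique) (simp_all add: cmp_madd_distrib_left[symmetric])

lemma cmp_mneg_left: "tgt C f = src C g \<Longrightarrow> mneg C g \<cdot> f = mneg C (g \<cdot> f)"
  by (rule mneg_unique) (simp_all add: cmp_madd_distrib_right[symmetric])

lemma shift_m_madd:
  "src C f = src C g \<Longrightarrow> tgt C f = tgt C g \<Longrightarrow>
    shift_m C (f \<^bold>+ g) = shift_m C f \<^bold>+ shift_m C g"
  using shift_madd[of f "src C f" "tgt C f" g] by simp

lemma shift_m_mzero [simp]: "shift_m C (mzero C X Y) = mzero C (shift_o C X) (shift_o C Y)"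
  using idempotent_madd_eq_mzero[of "shift_m C (mzero C X Y)"]
  by (simp add: shift_m_madd[symmetric])

declare shift_ident [simp]

lemma is_zero_obj_src_eq_mzero: "is_zero_obj C Z \<Longrightarrow> src C f = Z \<Longrightarrow> f = mzero C Z (tgt C f)"
  unfolding is_zero_obj_def by (metis cmp_mzero_right cmp_ident)

lemma is_zero_obj_shift: "is_zero_obj C Z \<Longrightarrow> is_zero_obj C (shift_o C Z)"
  unfolding is_zero_obj_def by (metis shift_ident shift_m_mzero)

lemma is_zero_obj_osum:
  assumes "is_zero_obj C Z" "is_zero_obj C Z'"
  shows "is_zero_obj C (osum C Z Z')"
proof -
  have "in1 C Z Z' = mzero C Z (osum C Z Z')" "in2 C Z Z' = mzero C Z' (osum C Z Z')"
    using is_zero_obj_src_eq_mzero[OF assms(1), of "in1 C Z Z'"]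
      is_zero_obj_src_eq_mzero[OF assms(2), of "in2 C Z Z'"] by simp_all
  then show ?thesis
    using biprod_id[of Z Z'] unfolding is_zero_obj_def by simp
qed

lemma is_iso_ident: "is_iso C (ident C X)"
  unfolding is_iso_def by (rule exI[of _ "ident C X"]) simp

lemma is_iso_mneg_ident: "is_iso C (mneg C (ident C X))"
  unfolding is_iso_def by (rule exI[of _ "mneg C (ident C X)"]) (simp add: cmp_mneg_left cmp_mneg_right)

lemma is_iso_inverse: "is_iso C c \<Longrightarrow> \<exists>d. is_iso C d \<and> src C d = tgt C c \<and> tgt C d = src C c"
  unfolding is_iso_def by (metis hom_iff)

lemma is_iso_if_square_zero:
  assumes x: "src C x = S" "tgt C x = S"
    and square_zero: "(x \<^bold>+ mneg C (ident C S)) \<cdot> (x \<^bold>+ mneg C (ident C S)) = mzero C S S"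
  shows "is_iso C x"
proof -
  define N where "N = x \<^bold>+ mneg C (ident C S)"
  have N: "src C N = S" "tgt C N = S" "N \<cdot> N = mzero C S S"
    using x square_zero unfolding N_def by simp_all
  have "x = (x \<^bold>+ mneg C (ident C S)) \<^bold>+ ident C S"
    using x by (simp add: madd_assoc')
  also have "\<dots> = ident C S \<^bold>+ N"
    using x unfolding N_def by (simp add: madd_commute)
  finally have x_eq: "x = ident C S \<^bold>+ N" .
  have "(ident C S \<^bold>+ mneg C N) \<cdot> x = ident C S" "x \<cdot> (ident C S \<^bold>+ mneg C N) = ident C S"
    using N unfolding x_eq
    by (simp_all add: cmp_madd_distrib_right cmp_madd_distrib_left cmp_mneg_left cmp_mneg_right
        madd_assoc')
  then show ?thesis
    unfolding is_iso_def using x N by (intro exI[of _ "ident C S \<^bold>+ mneg C N"]) simp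
qed

lemma is_iso_if_both_cmps_iso:
  assumes "tgt C c = src C d" "tgt C d = src C c" "is_iso C (d \<cdot> c)" "is_iso C (c \<cdot> d)"
  shows "is_iso C c"
proof -
  obtain p where p: "src C p = src C c" "tgt C p = src C c" "p \<cdot> (d \<cdot> c) = ident C (src C c)"
    using assms(1,2,3) unfolding is_iso_def by auto
  obtain q where q: "src C q = src C d" "tgt C q = src C d" "(c \<cdot> d) \<cdot> q = ident C (src C d)"
    using assms(1,2,4) unfolding is_iso_def by auto
  have left: "(p \<cdot> d) \<cdot> c = ident C (src C c)" and right: "c \<cdot> (d \<cdot> q) = ident C (tgt C c)"
    using assms(1,2) p q by (simp_all add: cmp_assoc')
  have "p \<cdot> d = (p \<cdot> d) \<cdot> (c \<cdot> (d \<cdot> q))"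
    using assms(1,2) p q right by simp
  also have "\<dots> = ((p \<cdot> d) \<cdot> c) \<cdot> (d \<cdot> q)"
    using assms(1,2) p q by (intro cmp_assoc) simp_all
  also have "\<dots> = d \<cdot> q"
    using assms(1,2) q left by simp
  finally show ?thesis
    unfolding is_iso_def using assms(1,2) p q left right by (intro exI[of _ "p \<cdot> d"]) simp
qed

section \<open>Biproducts\<close>

lemma pr_in_cmp [simp]:
  "pr1 C X Y \<cdot> in1 C X Y = ident C X" "pr2 C X Y \<cdot> in2 C X Y = ident C Y"
  "pr1 C X Y \<cdot> in2 C X Y = mzero C Y X" "pr2 C X Y \<cdot> in1 C X Y = mzero C X Y"
  "tgt C x = X \<Longrightarrow> pr1 C X Y \<cdot> (in1 C X Y \<cdot> x) = x"
  "tgt C x = Y \<Longrightarrow> pr1 C X Y \<cdot> (in2 C X Y \<cdot> x) = mzero C (src C x) X"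
  "tgt C x = X \<Longrightarrow> pr2 C X Y \<cdot> (in1 C X Y \<cdot> x) = mzero C (src C x) Y"
  "tgt C x = Y \<Longrightarrow> pr2 C X Y \<cdot> (in2 C X Y \<cdot> x) = x"
  by (simp_all add: cmp_assoc pr1_in1 pr1_in2 pr2_in1 pr2_in2)

lemma shift_pr_in_cmp [simp]:
  "tgt C x = shift_o C X \<Longrightarrow> shift_m C (pr1 C X Y) \<cdot> (shift_m C (in1 C X Y) \<cdot> x) = x"
  "tgt C x = shift_o C Y \<Longrightarrow>
    shift_m C (pr1 C X Y) \<cdot> (shift_m C (in2 C X Y) \<cdot> x) = mzero C (src C x) (shift_o C X)"
  "tgt C x = shift_o C X \<Longrightarrow>
    shift_m C (pr2 C X Y) \<cdot> (shift_m C (in1 C X Y) \<cdot> x) = mzero C (src C x) (shift_o C Y)"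
  "tgt C x = shift_o C Y \<Longrightarrow> shift_m C (pr2 C X Y) \<cdot> (shift_m C (in2 C X Y) \<cdot> x) = x"
  by (simp_all add: cmp_assoc shift_cmp[symmetric])

lemma src_tgt_msum [simp]:
  "src C (msum C f g) = osum C (src C f) (src C g)"
  "tgt C (msum C f g) = osum C (tgt C f) (tgt C g)"
  unfolding msum_def by simp_all

lemma msum_cmp_in:
  "msum C f g \<cdot> in1 C (src C f) (src C g) = in1 C (tgt C f) (tgt C g) \<cdot> f"
  "msum C f g \<cdot> in2 C (src C f) (src C g) = in2 C (tgt C f) (tgt C g) \<cdot> g"
  unfolding msum_def by (simp_all add: cmp_madd_distrib_right cmp_assoc')

lemma pr_cmp_msum:
  "pr1 C (tgt C f) (tgt C g) \<cdot> msum C f g = f \<cdot> pr1 C (src C f) (src C g)"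
  "pr2 C (tgt C f) (tgt C g) \<cdot> msum C f g = g \<cdot> pr2 C (src C f) (src C g)"
  unfolding msum_def by (simp_all add: cmp_madd_distrib_left cmp_assoc)

lemma msum_ident: "msum C (ident C X) (ident C Y) = ident C (osum C X Y)"
  unfolding msum_def by (simp add: biprod_id)

definition mpair :: "'m \<Rightarrow> 'm \<Rightarrow> 'm" where
  "mpair a b = in1 C (tgt C a) (tgt C b) \<cdot> a \<^bold>+ in2 C (tgt C a) (tgt C b) \<cdot> b"

definition mcopair :: "'m \<Rightarrow> 'm \<Rightarrow> 'm" where
  "mcopair a b = a \<cdot> pr1 C (src C a) (src C b) \<^bold>+ b \<cdot> pr2 C (src C a) (src C b)"

lemma src_tgt_mpair [simp]:
  "src C a = src C b \<Longrightarrow> src C (mpair a b) = src C a"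
  "src C a = src C b \<Longrightarrow> tgt C (mpair a b) = osum C (tgt C a) (tgt C b)"
  unfolding mpair_def by simp_all

lemma src_tgt_mcopair [simp]:
  "tgt C a = tgt C b \<Longrightarrow> src C (mcopair a b) = osum C (src C a) (src C b)"
  "tgt C a = tgt C b \<Longrightarrow> tgt C (mcopair a b) = tgt C a"
  unfolding mcopair_def by simp_all

lemma mcopair_cmp_in: "src C x = osum C A B \<Longrightarrow> mcopair (x \<cdot> in1 C A B) (x \<cdot> in2 C A B) = x"
  unfolding mcopair_def by (simp add: cmp_assoc' cmp_madd_distrib_left[symmetric] biprod_id)

lemma mpair_cmp:
  "src C a = src C b \<Longrightarrow> tgt C x = src C a \<Longrightarrow> mpair a b \<cdot> x = mpair (a \<cdot> x) (b \<cdot> x)"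
  unfolding mpair_def by (simp add: cmp_madd_distrib_right cmp_assoc')

lemma cmp_mcopair:
  "tgt C a = tgt C b \<Longrightarrow> src C x = tgt C a \<Longrightarrow> x \<cdot> mcopair a b = mcopair (x \<cdot> a) (x \<cdot> b)"
  unfolding mcopair_def by (simp add: cmp_madd_distrib_left cmp_assoc)

lemma msum_cmp_mpair:
  "src C a = src C b \<Longrightarrow> tgt C a = src C f \<Longrightarrow> tgt C b = src C g \<Longrightarrow>
    msum C f g \<cdot> mpair a b = mpair (f \<cdot> a) (g \<cdot> b)"
  unfolding msum_def mpair_def
  by (simp add: cmp_madd_distrib_left cmp_madd_distrib_right cmp_assoc')

lemma mcopair_cmp_msum:
  "tgt C a = tgt C b \<Longrightarrow> tgt C f = src C a \<Longrightarrow> tgt C g = src C b \<Longrightarrow>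
    mcopair a b \<cdot> msum C f g = mcopair (a \<cdot> f) (b \<cdot> g)"
  unfolding msum_def mcopair_def
  by (simp add: cmp_madd_distrib_left cmp_madd_distrib_right cmp_assoc')

lemma msum_eq_mpair: "msum C f g = mpair (f \<cdot> pr1 C (src C f) (src C g)) (g \<cdot> pr2 C (src C f) (src C g))"
  unfolding msum_def mpair_def by simp

definition shift_osum_split :: "'o \<Rightarrow> 'o \<Rightarrow> 'm" where
  "shift_osum_split X Y = mpair (shift_m C (pr1 C X Y)) (shift_m C (pr2 C X Y))"

definition shift_osum_join :: "'o \<Rightarrow> 'o \<Rightarrow> 'm" where
  "shift_osum_join X Y = mcopair (shift_m C (in1 C X Y)) (shift_m C (in2 C X Y))"

lemma src_tgt_shift_osum [simp]:
  "src C (shift_osum_split X Y) = shift_o C (osum C X Y)"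
  "tgt C (shift_osum_split X Y) = osum C (shift_o C X) (shift_o C Y)"
  "src C (shift_osum_join X Y) = osum C (shift_o C X) (shift_o C Y)"
  "tgt C (shift_osum_join X Y) = shift_o C (osum C X Y)"
  unfolding shift_osum_split_def shift_osum_join_def by simp_all

lemma shift_osum_split_join:
  "shift_osum_split X Y \<cdot> shift_osum_join X Y = ident C (osum C (shift_o C X) (shift_o C Y))"
  unfolding shift_osum_split_def shift_osum_join_def mpair_def mcopair_def
  by (simp add: cmp_madd_distrib_left cmp_madd_distrib_right cmp_assoc' biprod_id)

lemma shift_osum_join_split:
  "shift_osum_join X Y \<cdot> shift_osum_split X Y = ident C (shift_o C (osum C X Y))"
proof -
  have "shift_osum_join X Y \<cdot> shift_osum_split X Y
      = shift_m C (in1 C X Y \<cdot> pr1 C X Y \<^bold>+ in2 C X Y \<cdot> pr2 C X Y)"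
    unfolding shift_osum_split_def shift_osum_join_def mpair_def mcopair_def
    by (simp add: cmp_madd_distrib_left cmp_madd_distrib_right cmp_assoc' shift_m_madd shift_cmp)
  then show ?thesis
    by (simp add: biprod_id)
qed

section \<open>Exact triangles\<close>

lemma exact_triD:
  assumes "exact_tri C f g h"
  shows "tgt C f = src C g" "tgt C g = src C h" "tgt C h = shift_o C (src C f)"
  using exact_triangle[OF assms] unfolding is_triangle_def by auto

lemma exact_tri_rotate:
  assumes "exact_tri C f g h"
  shows "exact_tri C g h (mneg C (shift_m C f))"
  using TR2[OF exact_triangle[OF assms]] assms by blast

lemma exact_tri_mneg:
  assumes "exact_tri C f g h"
  shows "exact_tri C (mneg C f) (mneg C g) h"
proof (rule TR1_iso[OF assms _ _ is_iso_ident is_iso_mneg_ident is_iso_ident])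
  show "is_triangle C (mneg C f) (mneg C g) h"
    using exact_triD[OF assms] unfolding is_triangle_def by simp
  show "tri_morphism C f g h (mneg C f) (mneg C g) h
      (ident C (src C f)) (mneg C (ident C (tgt C f))) (ident C (tgt C g))"
    using exact_triD[OF assms] unfolding tri_morphism_def by (simp add: cmp_mneg_left cmp_mneg_right)
qed

lemma exact_tri_shift:
  assumes "exact_tri C f g h"
  shows "exact_tri C (shift_m C f) (shift_m C g) (mneg C (shift_m C h))"
  using exact_tri_mneg[OF exact_tri_rotate[OF exact_tri_rotate[OF exact_tri_rotate[OF assms]]]]
  by simp

lemma exact_tri_mzero_ident:
  assumes "is_zero_obj C Z"
  shows "exact_tri C (mzero C Z X) (ident C X) (mzero C X (shift_o C Z))"
proof -
  have triangle: "is_triangle C (mzero C Z X) (ident C X) (mzero C X (shift_o C Z))"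
    unfolding is_triangle_def by simp
  moreover have "exact_tri C (ident C X) (mzero C X (shift_o C Z))
      (mzero C (shift_o C Z) (shift_o C X))"
    using TR1_ident[OF is_zero_obj_shift[OF assms]] .
  ultimately show ?thesis
    using TR2[OF triangle] by simp
qed

lemma exact_tri_iso_mzero:
  assumes "is_iso C c" "is_zero_obj C Z"
  shows "exact_tri C c (mzero C (tgt C c) Z) (mzero C Z (shift_o C (src C c)))"
proof (rule TR1_iso[OF TR1_ident[OF assms(2)] _ _ is_iso_ident assms(1) is_iso_ident])
  show "is_triangle C c (mzero C (tgt C c) Z) (mzero C Z (shift_o C (src C c)))"
    unfolding is_triangle_def by simp
  show "tri_morphism C (ident C (src C c)) (mzero C (src C c) Z)
      (mzero C Z (shift_o C (src C c))) c (mzero C (tgt C c) Z)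
      (mzero C Z (shift_o C (src C c))) (ident C (src C c)) c (ident C Z)"
    unfolding tri_morphism_def by simp
qed

lemma morphism_rhoD:
  assumes "morphism_rho C \<rho>"
  shows "0 \<le> \<rho> f" "\<rho> (shift_m C f) = \<rho> f" "\<rho> (msum C f g) = \<rho> f + \<rho> g"
    and "exact_tri C f g h \<Longrightarrow> \<rho> f + \<rho> g = \<rho> (ident C (tgt C f))"
  using assms unfolding morphism_rho_def by blast+

lemma object_rho_of_morphism_rho:
  assumes \<rho>: "morphism_rho C \<rho>"
  shows "object_rho C (\<lambda>X. \<rho> (ident C X))"
  unfolding object_rho_def
proof (intro conjI allI impI)
  fix X Y
  show "0 \<le> \<rho> (ident C X)"
    using morphism_rhoD(1)[OF \<rho>] .
  show "\<rho> (ident C (shift_o C X)) = \<rho> (ident C X)"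
    using morphism_rhoD(2)[OF \<rho>, of "ident C X"] by simp
  show "\<rho> (ident C (osum C X Y)) = \<rho> (ident C X) + \<rho> (ident C Y)"
    using morphism_rhoD(3)[OF \<rho>, of "ident C X" "ident C Y"] by (simp add: msum_ident)
next
  fix f g h
  assume e: "exact_tri C f g h"
  have "\<rho> f + \<rho> g = \<rho> (ident C (tgt C f))"
    using morphism_rhoD(4)[OF \<rho> e] .
  moreover have "\<rho> g + \<rho> h = \<rho> (ident C (tgt C g))"
    using morphism_rhoD(4)[OF \<rho> exact_tri_rotate[OF e]] by simp
  moreover have "\<rho> (mneg C h) + \<rho> f = \<rho> (ident C (src C f))"
    using morphism_rhoD(4)[OF \<rho> exact_tri_mneg[OF exact_tri_rotate[OF exact_tri_rotate[OF e]]]]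
      morphism_rhoD(2)[OF \<rho>, of "ident C (src C f)"] morphism_rhoD(2)[OF \<rho>, of f]
      exact_triD[OF e]
    by simp
  ultimately show "\<rho> (ident C (tgt C f)) \<le> \<rho> (ident C (src C f)) + \<rho> (ident C (tgt C g))"
    using morphism_rhoD(1)[OF \<rho>, of h] morphism_rhoD(1)[OF \<rho>, of "mneg C h"] by linarith
qed

section \<open>Cones of direct sums\<close>

definition weak_cokernel :: "'m \<Rightarrow> 'm \<Rightarrow> bool" where
  "weak_cokernel f g \<longleftrightarrow> tgt C f = src C g \<and>
    (\<forall>x. src C x = tgt C f \<longrightarrow> x \<cdot> f = mzero C (src C f) (tgt C x) \<longrightarrow>
      (\<exists>y. src C y = tgt C g \<and> tgt C y = tgt C x \<and> x = y \<cdot> g))"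

lemma weak_cokernelD:
  assumes "weak_cokernel f g" "x \<cdot> f = mzero C (src C f) (tgt C x)" "src C x = tgt C f"
  obtains y where "src C y = tgt C g" "tgt C y = tgt C x" "x = y \<cdot> g"
  using assms unfolding weak_cokernel_def by blast

text \<open>The factorisation is the third map of a TR3 filler into the triangle \<open>0 \<rightarrow> T \<rightarrow> T \<rightarrow> \<Sigma>0\<close>.\<close>

lemma exact_tri_weak_cokernel:
  assumes "exact_tri C f g h"
  shows "weak_cokernel f g"
  unfolding weak_cokernel_def
proof (intro conjI allI impI)
  show "tgt C f = src C g"
    using exact_triD[OF assms] by simp
  fix x
  assume x: "src C x = tgt C f" and x_f: "x \<cdot> f = mzero C (src C f) (tgt C x)"
  obtain Z where Z: "is_zero_obj C Z"
    using zero_obj_ex by blast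
  obtain y where "tri_morphism C f g h (mzero C Z (tgt C x)) (ident C (tgt C x))
      (mzero C (tgt C x) (shift_o C Z)) (mzero C (src C f) Z) x y"
    using TR3[OF assms exact_tri_mzero_ident[OF Z, of "tgt C x"], of "mzero C (src C f) Z" x]
      x x_f by auto
  then show "\<exists>y. src C y = tgt C g \<and> tgt C y = tgt C x \<and> x = y \<cdot> g"
    unfolding tri_morphism_def by auto
qed

lemma weak_cokernel_msum:
  assumes f: "weak_cokernel f g" and f': "weak_cokernel f' g'"
  shows "weak_cokernel (msum C f f') (msum C g g')"
  unfolding weak_cokernel_def
proof (intro conjI allI impI)
  have fg: "tgt C f = src C g" "tgt C f' = src C g'"
    using f f' unfolding weak_cokernel_def by simp_all
  then show "tgt C (msum C f f') = src C (msum C g g')"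
    by simp
  fix x
  assume x: "src C x = tgt C (msum C f f')"
    and x_zero: "x \<cdot> msum C f f' = mzero C (src C (msum C f f')) (tgt C x)"
  define i1 i2 where "i1 = in1 C (tgt C f) (tgt C f')" and "i2 = in2 C (tgt C f) (tgt C f')"
  have "(x \<cdot> i1) \<cdot> f = (x \<cdot> msum C f f') \<cdot> in1 C (src C f) (src C f')"
    using x unfolding i1_def by (simp add: msum_cmp_in cmp_assoc')
  also have "\<dots> = mzero C (src C f) (tgt C (x \<cdot> i1))"
    using x x_zero unfolding i1_def by simp
  finally obtain y1 where y1: "src C y1 = tgt C g" "tgt C y1 = tgt C x" "x \<cdot> i1 = y1 \<cdot> g"
    by (rule weak_cokernelD[OF f]) (use x in \<open>simp_all add: i1_def\<close>)
  have "(x \<cdot> i2) \<cdot> f' = (x \<cdot> msum C f f') \<cdot> in2 C (src C f) (src C f')"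
    using x unfolding i2_def by (simp add: msum_cmp_in cmp_assoc')
  also have "\<dots> = mzero C (src C f') (tgt C (x \<cdot> i2))"
    using x x_zero unfolding i2_def by simp
  finally obtain y2 where y2: "src C y2 = tgt C g'" "tgt C y2 = tgt C x" "x \<cdot> i2 = y2 \<cdot> g'"
    by (rule weak_cokernelD[OF f']) (use x in \<open>simp_all add: i2_def\<close>)
  have "x = mcopair (x \<cdot> i1) (x \<cdot> i2)"
    using x unfolding i1_def i2_def by (simp add: mcopair_cmp_in)
  also have "\<dots> = mcopair y1 y2 \<cdot> msum C g g'"
    using y1 y2 fg by (simp add: mcopair_cmp_msum)
  finally have "x = mcopair y1 y2 \<cdot> msum C g g'" .
  moreover have "src C (mcopair y1 y2) = tgt C (msum C g g')" "tgt C (mcopair y1 y2) = tgt C x"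
    using y1 y2 by simp_all
  ultimately show "\<exists>y. src C y = tgt C (msum C g g') \<and> tgt C y = tgt C x \<and> x = y \<cdot> msum C g g'"
    by blast
qed

text \<open>\<open>\<phi> - 1\<close> kills \<open>g\<close>, so it factors through \<open>h\<close>; as \<open>h\<close> kills \<open>\<phi> - 1\<close>, its square is zero.\<close>

lemma is_iso_if_fixes_weak_cokernel:
  assumes gh: "weak_cokernel g h"
    and \<phi>: "src C \<phi> = tgt C g" "tgt C \<phi> = tgt C g" "\<phi> \<cdot> g = g" "h \<cdot> \<phi> = h"
  shows "is_iso C \<phi>"
proof -
  define Z where "Z = tgt C g"
  define N where "N = \<phi> \<^bold>+ mneg C (ident C Z)"
  have h: "src C h = Z"
    using gh unfolding weak_cokernel_def Z_def by simp
  have N: "src C N = Z" "tgt C N = Z"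
    using \<phi> unfolding N_def Z_def by simp_all
  have "N \<cdot> g = mzero C (src C g) (tgt C N)"
    using \<phi> N unfolding N_def Z_def by (simp add: cmp_madd_distrib_right cmp_mneg_left)
  then obtain Q where Q: "src C Q = tgt C h" "tgt C Q = Z" "N = Q \<cdot> h"
    by (rule weak_cokernelD[OF gh]) (use N in \<open>simp_all add: Z_def\<close>)
  have "h \<cdot> N = mzero C Z (tgt C h)"
    using \<phi> h unfolding N_def Z_def by (simp add: cmp_madd_distrib_left cmp_mneg_right)
  then have "N \<cdot> N = mzero C Z Z"
    using Q h N by (simp add: cmp_assoc')
  then show ?thesis
    using is_iso_if_square_zero[of \<phi> Z] \<phi> unfolding N_def Z_def by simp
qed

lemma cone_msum_map_into:
  assumes e1: "exact_tri C f u u'" and e2: "exact_tri C g v v'"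
    and e: "exact_tri C (msum C f g) w w'"
  obtains c where "src C c = osum C (tgt C u) (tgt C v)" "tgt C c = tgt C w"
    "c \<cdot> msum C u v = w"
    "w' \<cdot> c = shift_osum_join (src C f) (src C g) \<cdot> msum C u' v'"
proof -
  obtain X Y X' Y' where XY [simp]: "src C f = X" "tgt C f = Y" "src C g = X'" "tgt C g = Y'"
    by blast
  note types [simp] = exact_triD(1,2)[OF e1, symmetric] exact_triD(3)[OF e1]
    exact_triD(1,2)[OF e2, symmetric] exact_triD(3)[OF e2]
    exact_triD(1,2)[OF e, symmetric] exact_triD(3)[OF e]
  obtain c1 where "tri_morphism C f u u' (msum C f g) w w' (in1 C X X') (in1 C Y Y') c1"
    using TR3[OF e1 e, of "in1 C X X'" "in1 C Y Y'"] msum_cmp_in[of f g] by simp blast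
  then have c1: "src C c1 = tgt C u" "tgt C c1 = tgt C w"
      "c1 \<cdot> u = w \<cdot> in1 C Y Y'" "w' \<cdot> c1 = shift_m C (in1 C X X') \<cdot> u'"
    unfolding tri_morphism_def by auto
  obtain c2 where "tri_morphism C g v v' (msum C f g) w w' (in2 C X X') (in2 C Y Y') c2"
    using TR3[OF e2 e, of "in2 C X X'" "in2 C Y Y'"] msum_cmp_in[of f g] by simp blast
  then have c2: "src C c2 = tgt C v" "tgt C c2 = tgt C w"
      "c2 \<cdot> v = w \<cdot> in2 C Y Y'" "w' \<cdot> c2 = shift_m C (in2 C X X') \<cdot> v'"
    unfolding tri_morphism_def by auto
  show ?thesis
  proof
    show "src C (mcopair c1 c2) = osum C (tgt C u) (tgt C v)" "tgt C (mcopair c1 c2) = tgt C w"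
      using c1 c2 by simp_all
    have "mcopair c1 c2 \<cdot> msum C u v = mcopair (w \<cdot> in1 C Y Y') (w \<cdot> in2 C Y Y')"
      using c1 c2 by (simp add: mcopair_cmp_msum)
    also have "\<dots> = w"
      by (simp add: mcopair_cmp_in)
    finally show "mcopair c1 c2 \<cdot> msum C u v = w" .
    have "w' \<cdot> mcopair c1 c2 = mcopair (shift_m C (in1 C X X') \<cdot> u') (shift_m C (in2 C X X') \<cdot> v')"
      using c1 c2 by (simp add: cmp_mcopair)
    also have "\<dots> = mcopair (shift_m C (in1 C X X')) (shift_m C (in2 C X X')) \<cdot> msum C u' v'"
      by (simp add: mcopair_cmp_msum)
    finally show "w' \<cdot> mcopair c1 c2 = shift_osum_join (src C f) (src C g) \<cdot> msum C u' v'"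
      by (simp add: shift_osum_join_def)
  qed
qed

lemma cone_msum_map_onto:
  assumes e1: "exact_tri C f u u'" and e2: "exact_tri C g v v'"
    and e: "exact_tri C (msum C f g) w w'"
  obtains d where "src C d = tgt C w" "tgt C d = osum C (tgt C u) (tgt C v)"
    "d \<cdot> w = msum C u v"
    "msum C u' v' \<cdot> d = shift_osum_split (src C f) (src C g) \<cdot> w'"
proof -
  obtain X Y X' Y' where XY [simp]: "src C f = X" "tgt C f = Y" "src C g = X'" "tgt C g = Y'"
    by blast
  note types [simp] = exact_triD(1,2)[OF e1, symmetric] exact_triD(3)[OF e1]
    exact_triD(1,2)[OF e2, symmetric] exact_triD(3)[OF e2]
    exact_triD(1,2)[OF e, symmetric] exact_triD(3)[OF e]
  obtain d1 where "tri_morphism C (msum C f g) w w' f u u' (pr1 C X X') (pr1 C Y Y') d1"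
    using TR3[OF e e1, of "pr1 C X X'" "pr1 C Y Y'"] pr_cmp_msum[of f g] by simp blast
  then have d1: "src C d1 = tgt C w" "tgt C d1 = tgt C u"
      "d1 \<cdot> w = u \<cdot> pr1 C Y Y'" "u' \<cdot> d1 = shift_m C (pr1 C X X') \<cdot> w'"
    unfolding tri_morphism_def by auto
  obtain d2 where "tri_morphism C (msum C f g) w w' g v v' (pr2 C X X') (pr2 C Y Y') d2"
    using TR3[OF e e2, of "pr2 C X X'" "pr2 C Y Y'"] pr_cmp_msum[of f g] by simp blast
  then have d2: "src C d2 = tgt C w" "tgt C d2 = tgt C v"
      "d2 \<cdot> w = v \<cdot> pr2 C Y Y'" "v' \<cdot> d2 = shift_m C (pr2 C X X') \<cdot> w'"
    unfolding tri_morphism_def by auto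
  show ?thesis
  proof
    show "src C (mpair d1 d2) = tgt C w" "tgt C (mpair d1 d2) = osum C (tgt C u) (tgt C v)"
      using d1 d2 by simp_all
    show "mpair d1 d2 \<cdot> w = msum C u v"
      using d1 d2 by (simp add: mpair_cmp msum_eq_mpair)
    have "msum C u' v' \<cdot> mpair d1 d2 = mpair (shift_m C (pr1 C X X') \<cdot> w') (shift_m C (pr2 C X X') \<cdot> w')"
      using d1 d2 by (simp add: msum_cmp_mpair)
    also have "\<dots> = mpair (shift_m C (pr1 C X X')) (shift_m C (pr2 C X X')) \<cdot> w'"
      by (simp add: mpair_cmp)
    finally show "msum C u' v' \<cdot> mpair d1 d2 = shift_osum_split (src C f) (src C g) \<cdot> w'"
      by (simp add: shift_osum_split_def)
  qed
qed

text \<open>The sum of two exact triangles is not known to be exact, but the weak cokernel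
  property of its second map is all that is needed to see that \<open>d c\<close> is invertible.\<close>

lemma cone_msum_iso:
  assumes e1: "exact_tri C f u u'" and e2: "exact_tri C g v v'"
    and e: "exact_tri C (msum C f g) w w'"
  obtains c where "is_iso C c" "src C c = osum C (tgt C u) (tgt C v)" "tgt C c = tgt C w"
proof -
  define split join where "split = shift_osum_split (src C f) (src C g)"
    and "join = shift_osum_join (src C f) (src C g)"
  obtain c where c: "src C c = osum C (tgt C u) (tgt C v)" "tgt C c = tgt C w"
      "c \<cdot> msum C u v = w" "w' \<cdot> c = join \<cdot> msum C u' v'"
    using cone_msum_map_into[OF e1 e2 e] unfolding join_def by blast
  obtain d where d: "src C d = tgt C w" "tgt C d = osum C (tgt C u) (tgt C v)"
      "d \<cdot> w = msum C u v" "msum C u' v' \<cdot> d = split \<cdot> w'"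
    using cone_msum_map_onto[OF e1 e2 e] unfolding split_def by blast
  note types [simp] = exact_triD(1,2)[OF e1, symmetric] exact_triD(3)[OF e1]
    exact_triD(1,2)[OF e2, symmetric] exact_triD(3)[OF e2]
    exact_triD(1,2)[OF e, symmetric] exact_triD(3)[OF e] c(1,2) d(1,2)
    src_tgt_shift_osum[of "src C f" "src C g", folded split_def join_def]
  note split_join = shift_osum_split_join[of "src C f" "src C g", folded split_def join_def]
    and join_split = shift_osum_join_split[of "src C f" "src C g", folded split_def join_def]
  have "is_iso C (c \<cdot> d)"
  proof (rule is_iso_if_fixes_weak_cokernel[OF exact_tri_weak_cokernel[OF exact_tri_rotate[OF e]]])
    show "c \<cdot> d \<cdot> w = w"
      using c d by (simp add: cmp_assoc')
    have "w' \<cdot> (c \<cdot> d) = (join \<cdot> msum C u' v') \<cdot> d"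
      using c(4) cmp_assoc[of d c w'] by simp
    also have "\<dots> = join \<cdot> (split \<cdot> w')"
      using d(4) cmp_assoc'[of d "msum C u' v'" join] by simp
    also have "\<dots> = w'"
      using join_split cmp_assoc[of w' split join] by simp
    finally show "w' \<cdot> (c \<cdot> d) = w'" .
  qed simp_all
  moreover have "is_iso C (d \<cdot> c)"
  proof (rule is_iso_if_fixes_weak_cokernel[OF weak_cokernel_msum[OF
        exact_tri_weak_cokernel[OF exact_tri_rotate[OF e1]]
        exact_tri_weak_cokernel[OF exact_tri_rotate[OF e2]]]])
    show "d \<cdot> c \<cdot> msum C u v = msum C u v"
      using c d by (simp add: cmp_assoc')
    have "msum C u' v' \<cdot> (d \<cdot> c) = (split \<cdot> w') \<cdot> c"
      using d(4) cmp_assoc[of c d "msum C u' v'"] by simp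
    also have "\<dots> = split \<cdot> (join \<cdot> msum C u' v')"
      using c(4) cmp_assoc'[of c w' split] by simp
    also have "\<dots> = msum C u' v'"
      using split_join cmp_assoc[of "msum C u' v'" join split] by simp
    finally show "msum C u' v' \<cdot> (d \<cdot> c) = msum C u' v'" .
  qed simp_all
  ultimately show ?thesis
    using c d is_iso_if_both_cmps_iso[of c d] that by simp
qed

section \<open>Functions on objects\<close>

lemma object_rhoD:
  assumes "object_rho C \<rho>"
  shows "0 \<le> \<rho> X" "\<rho> (shift_o C X) = \<rho> X" "\<rho> (osum C X Y) = \<rho> X + \<rho> Y"
    and "exact_tri C f g h \<Longrightarrow> \<rho> (tgt C f) \<le> \<rho> (src C f) + \<rho> (tgt C g)"
  using assms unfolding object_rho_def by blast+

lemma object_rho_zero_obj: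
  assumes \<rho>: "object_rho C \<rho>" and Z: "is_zero_obj C Z"
  shows "\<rho> Z = 0"
proof -
  have bound: "\<rho> Z' \<le> 2 * \<rho> X" if "is_zero_obj C Z'" for Z' X
    using object_rhoD(4)[OF \<rho> exact_tri_rotate[OF TR1_ident[OF that, of X]]] object_rhoD(2)[OF \<rho>]
    by simp
  have "4 * \<rho> Z = \<rho> (osum C (osum C Z Z) (osum C Z Z))"
    using object_rhoD(3)[OF \<rho>] by simp
  also have "\<dots> \<le> 2 * \<rho> Z"
    using bound is_zero_obj_osum Z by blast
  finally show ?thesis
    using object_rhoD(1)[OF \<rho>, of Z] by simp
qed

lemma object_rho_iso:
  assumes \<rho>: "object_rho C \<rho>" and c: "is_iso C c"
  shows "\<rho> (tgt C c) = \<rho> (src C c)"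
proof -
  obtain Z where Z: "is_zero_obj C Z"
    using zero_obj_ex by blast
  have le: "\<rho> (tgt C c') \<le> \<rho> (src C c')" if "is_iso C c'" for c'
    using object_rhoD(4)[OF \<rho> exact_tri_iso_mzero[OF that Z]] object_rho_zero_obj[OF \<rho> Z] by simp
  obtain d where "is_iso C d" "src C d = tgt C c" "tgt C d = src C c"
    using is_iso_inverse[OF c] by blast
  then show ?thesis
    using le[OF c] le[of d] by simp
qed

text \<open>By the octahedral axiom for \<open>f = id \<circ> f\<close>: as the cone of \<open>id\<close> is zero,
  two cones of \<open>f\<close> are joined by an exact triangle \<open>C \<rightarrow> C' \<rightarrow> 0 \<rightarrow> \<Sigma>C\<close>.\<close>

lemma object_rho_cone_unique:
  assumes \<rho>: "object_rho C \<rho>" and e1: "exact_tri C f u u'" and e2: "exact_tri C f w w'"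
  shows "\<rho> (tgt C w) = \<rho> (tgt C u)"
proof -
  obtain Z where Z: "is_zero_obj C Z"
    using zero_obj_ex by blast
  have le: "\<rho> (tgt C w) \<le> \<rho> (tgt C u)"
    if e1: "exact_tri C f u u'" and e2: "exact_tri C f w w'" for u u' w w'
  proof -
    have e2': "exact_tri C (ident C (tgt C f) \<cdot> f) w w'"
      using e2 by simp
    obtain a b where "src C a = tgt C u" "tgt C a = tgt C w" "tgt C b = Z"
        "exact_tri C a b (shift_m C u \<cdot> mzero C Z (shift_o C (tgt C f)))"
      using TR4[OF _ e1 TR1_ident[OF Z, of "tgt C f"] e2'] by auto
    then show ?thesis
      using object_rhoD(4)[OF \<rho>] object_rho_zero_obj[OF \<rho> Z] by fastforce
  qed
  show ?thesis
    using le[OF e1 e2] le[OF e2 e1] by simp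
qed

lemma object_rho_cone_le:
  assumes \<rho>: "object_rho C \<rho>" and e: "exact_tri C f g h"
  shows "\<rho> (tgt C g) \<le> \<rho> (src C f) + \<rho> (tgt C f)"
  using object_rhoD(4)[OF \<rho> exact_tri_rotate[OF e]] object_rhoD(2)[OF \<rho>] exact_triD[OF e]
  by simp

lemma object_rho_cone_msum:
  assumes \<rho>: "object_rho C \<rho>"
    and "exact_tri C f u u'" "exact_tri C g v v'" "exact_tri C (msum C f g) w w'"
  shows "\<rho> (tgt C w) = \<rho> (tgt C u) + \<rho> (tgt C v)"
proof -
  obtain c where "is_iso C c" "src C c = osum C (tgt C u) (tgt C v)" "tgt C c = tgt C w"
    using cone_msum_iso[OF assms(2-4)] .
  then show ?thesis
    using object_rho_iso[OF \<rho>] object_rhoD(3)[OF \<rho>] by metis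
qed

lemma morphism_rho_of_object_rho:
  assumes \<rho>: "object_rho C \<rho>"
    and cone: "\<forall>f. \<exists>g h. exact_tri C f g h \<and> tgt C g = cone f"
  shows "morphism_rho C (\<lambda>f. (\<rho> (src C f) + \<rho> (tgt C f) - \<rho> (cone f)) / 2)"
proof -
  have \<rho>_cone: "\<rho> (cone f) = \<rho> (tgt C g)" if e: "exact_tri C f g h" for f g h
    using cone object_rho_cone_unique[OF \<rho> e] by metis
  have cone_ex: "\<exists>g h. exact_tri C f g h" for f
    using cone by blast
  show ?thesis
    unfolding morphism_rho_def
  proof (intro conjI allI impI)
    fix f g
    obtain u u' where e1: "exact_tri C f u u'"
      using cone_ex by blast
    obtain v v' where e2: "exact_tri C g v v'"
      using cone_ex by blast
    obtain w w' where e: "exact_tri C (msum C f g) w w'"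
      using cone_ex by blast
    show "0 \<le> (\<rho> (src C f) + \<rho> (tgt C f) - \<rho> (cone f)) / 2"
      using object_rho_cone_le[OF \<rho> e1] \<rho>_cone[OF e1] by simp
    show "(\<rho> (src C (shift_m C f)) + \<rho> (tgt C (shift_m C f)) - \<rho> (cone (shift_m C f))) / 2
        = (\<rho> (src C f) + \<rho> (tgt C f) - \<rho> (cone f)) / 2"
      using \<rho>_cone[OF exact_tri_shift[OF e1]] \<rho>_cone[OF e1] object_rhoD(2)[OF \<rho>] by simp
    show "(\<rho> (src C (msum C f g)) + \<rho> (tgt C (msum C f g)) - \<rho> (cone (msum C f g))) / 2
        = (\<rho> (src C f) + \<rho> (tgt C f) - \<rho> (cone f)) / 2
          + (\<rho> (src C g) + \<rho> (tgt C g) - \<rho> (cone g)) / 2"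
      using object_rho_cone_msum[OF \<rho> e1 e2 e] \<rho>_cone[OF e1] \<rho>_cone[OF e2] \<rho>_cone[OF e]
        object_rhoD(3)[OF \<rho>]
      by (simp add: field_simps)
  next
    fix f g h
    assume e: "exact_tri C f g h"
    obtain Z where "is_zero_obj C Z"
      using zero_obj_ex by blast
    then have "\<rho> (cone (ident C (tgt C f))) = 0"
      using \<rho>_cone[OF TR1_ident] object_rho_zero_obj[OF \<rho>] by simp
    then show "(\<rho> (src C f) + \<rho> (tgt C f) - \<rho> (cone f)) / 2
        + (\<rho> (src C g) + \<rho> (tgt C g) - \<rho> (cone g)) / 2
        = (\<rho> (src C (ident C (tgt C f))) + \<rho> (tgt C (ident C (tgt C f)))
          - \<rho> (cone (ident C (tgt C f)))) / 2"
      using \<rho>_cone[OF e] \<rho>_cone[OF exact_tri_rotate[OF e]] object_rhoD(2)[OF \<rho>] exact_triD[OF e]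
      by (simp add: field_simps)
  qed
qed

end

theorem proposition2p4:
  fixes C :: "('o, 'm) tcat"
  assumes "triangulated_category C"
  shows "(\<forall>\<rho>. morphism_rho C \<rho> \<longrightarrow> object_rho C (\<lambda>X. \<rho> (ident C X))) \<and>
         (\<forall>\<rho> cone. object_rho C \<rho> \<and>
            (\<forall>f. \<exists>g h. exact_tri C f g h \<and> tgt C g = cone f) \<longrightarrow>
            morphism_rho C (\<lambda>f. (\<rho> (src C f) + \<rho> (tgt C f) - \<rho> (cone f)) / 2))"
  using triangulated_category.object_rho_of_morphism_rho[OF assms]
    triangulated_category.morphism_rho_of_object_rho[OF assms] by blast

end
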